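(* Let $L \ge N$, let $\mathbf{T} \in \mathbb{R}^{L\times N}$ have full rank $N$, and let $\gamma>0$. Define the set-valued map $H:\mathbb{R}^N\rightrightarrows\mathbb{R}^N$ by $\mathbf{y}\in H(\mathbf{x})$ if and only if $\mathbf{x} = \mathbf{T}^{\dagger}S_\gamma\mathbf{T}(\mathbf{x}+\mathbf{y})$. Equip $\mathbb{R}^N$ with the scalar product $\langle\mathbf{x},\mathbf{y}\rangle_{\mathbf{T}} := \mathbf{x}^T\mathbf{T}^*\mathbf{T}\mathbf{y}$. Then $H$ is cyclically monotone with respect to $\langle\cdot,\cdot\rangle_{\mathbf{T}}$: for every integer $m\ge 2$, all $\mathbf{x}_1,\dots,\mathbf{x}_m\in\mathbb{R}^N$ and all $\mathbf{y}_i\in H(\mathbf{x}_i)$, $i=1,\dots,m$, $$\langle \mathbf{x}_2-\mathbf{x}_1,\mathbf{y}_1\rangle_{\mathbf{T}} + \langle \mathbf{x}_3-\mathbf{x}_2,\mathbf{y}_2\rangle_{\mathbf{T}} + \cdots + \langle \mathbf{x}_1-\mathbf{x}_m,\mathbf{y}_m\rangle_{\mathbf{T}} \le 0.$$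
   Context: $\mathbf{T}^*$ is the transpose of $\mathbf{T}$, $\mathbf{T}^{\dagger}=(\mathbf{T}^*\mathbf{T})^{-1}\mathbf{T}^*$ its Moore–Penrose inverse. $S_\gamma:\mathbb{R}^L\to\mathbb{R}^L$ is componentwise soft shrinkage: $[S_\gamma(\mathbf{y})]_j = y_j-\gamma$ if $y_j\ge\gamma$, $y_j+\gamma$ if $y_j\le-\gamma$, $0$ if $|y_j|<\gamma$. *)

theory Defs
  imports "HOL-Analysis.Analysis"
begin

definition soft_shrink :: "real \<Rightarrow> real^'l \<Rightarrow> real^'l" where
  "soft_shrink g y = (\<chi> j. if y $ j \<ge> g then y $ j - g
                          else if y $ j \<le> - g then y $ j + g else 0)"

definition mp_inv :: "real^'n^'l \<Rightarrow> real^'l^'n" where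
  "mp_inv T = matrix_inv (transpose T ** T) ** transpose T"

definition H_map :: "real^'n^'l \<Rightarrow> real \<Rightarrow> real^'n \<Rightarrow> (real^'n) set" where
  "H_map T g x = {y. x = mp_inv T *v soft_shrink g (T *v (x + y))}"

definition inner_T :: "real^'n^'l \<Rightarrow> real^'n \<Rightarrow> real^'n \<Rightarrow> real" where
  "inner_T T x y = x \<bullet> ((transpose T ** T) *v y)"

end

theory Submission
  imports Defs
begin

text \<open>
  Write u = T x and a = T (x + y). Then y \<in> H x says u = P (S a), where P = T T^+ is the
  orthogonal projection onto the range V of T, and T y = a - u. Soft shrinkage is the gradient of
  the convex function \<psi>(a) = |S a|^2/2 and is firmly nonexpansive, so u is the gradient at a
  of the 1-smooth convex function \<phi> = \<psi> restricted to V. Hence a - u is a subgradient at u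
  of \<phi>* - |.|^2/2, which is convex because \<phi> is 1-smooth. Concretely this gives a
  subgradient inequality <x' - x, y>_T \<le> G(x', y') - G(x, y) for an explicit potential G, and
  summing it around a cycle telescopes to 0.
\<close>

lemma cyclic_sum_le_zero_of_potential:
  fixes c :: "nat \<Rightarrow> nat \<Rightarrow> real" and G :: "nat \<Rightarrow> real"
  assumes "\<And>i j. i < m \<Longrightarrow> j < m \<Longrightarrow> c i j \<le> G j - G i"
  shows "(\<Sum>i<m. c i (Suc i mod m)) \<le> 0"
proof (cases m)
  case 0
  then show ?thesis by simp
next
  case (Suc k)
  have rotate: "(\<Sum>i<m. G (Suc i mod m)) = (\<Sum>i<m. G i)"
  proof -
    have "(\<Sum>i<m. G (Suc i mod m)) = (\<Sum>i<k. G (Suc i)) + G 0"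
      using Suc by simp
    also have "\<dots> = (\<Sum>i<m. G i)"
      unfolding Suc sum.lessThan_Suc_shift by simp
    finally show ?thesis .
  qed
  have "(\<Sum>i<m. c i (Suc i mod m)) \<le> (\<Sum>i<m. G (Suc i mod m) - G i)"
    using Suc by (intro sum_mono assms) auto
  also have "\<dots> = 0"
    by (simp add: sum_subtractf rotate)
  finally show ?thesis .
qed

lemma matrix_vector_mul_inner_transpose:
  fixes A :: "real^'n^'m"
  shows "(A *v c) \<bullet> w = c \<bullet> (transpose A *v w)"
  by (metis dot_lmul_matrix inner_commute transpose_matrix_vector)

lemma inner_T_eq_inner: "inner_T T u v = (T *v u) \<bullet> (T *v v)"
  by (simp add: inner_T_def matrix_vector_mul_inner_transpose matrix_vector_mul_assoc)

lemma matrix_inv_right: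
  assumes "invertible A"
  shows "A ** matrix_inv A = mat 1"
  using assms unfolding invertible_def matrix_inv_def by (rule someI2_ex) blast

lemma invertible_gram_matrix:
  fixes T :: "real^'n^'l"
  assumes "rank T = CARD('n)"
  shows "invertible (transpose T ** T)"
proof -
  have inj_T: "inj ((*v) T)"
    using assms full_rank_injective by blast
  have "c = 0" if "(transpose T ** T) *v c = 0" for c
  proof -
    have "(T *v c) \<bullet> (T *v c) = 0"
      using that by (simp add: matrix_vector_mul_inner_transpose matrix_vector_mul_assoc)
    then have "T *v c = 0"
      by simp
    then show "c = 0"
      using inj_T by (metis inj_eq matrix_vector_mult_0_right)
  qed
  then have "inj ((*v) (transpose T ** T))"
    by (simp add: linear_injective_0)
  then show ?thesis
    using matrix_left_invertible_injective invertible_left_inverse by blast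
qed

lemma inner_range_mp_inv_proj:
  fixes T :: "real^'n^'l"
  assumes "rank T = CARD('n)"
  shows "(T *v c) \<bullet> (T *v (mp_inv T *v w)) = (T *v c) \<bullet> w"
proof -
  define A where "A = transpose T ** T"
  have "(T *v c) \<bullet> (T *v (mp_inv T *v w))
        = c \<bullet> ((A ** matrix_inv A) *v (transpose T *v w))"
    by (simp only: A_def mp_inv_def matrix_vector_mul_inner_transpose matrix_vector_mul_assoc
        matrix_mul_assoc)
  also have "\<dots> = (T *v c) \<bullet> w"
    using invertible_gram_matrix[OF assms]
    by (simp add: A_def matrix_inv_right matrix_vector_mul_inner_transpose)
  finally show ?thesis .
qed

lemma norm_mp_inv_proj_le:
  fixes T :: "real^'n^'l"
  assumes "rank T = CARD('n)"
  shows "norm (T *v (mp_inv T *v w)) \<le> norm w"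
proof -
  let ?q = "T *v (mp_inv T *v w)"
  have "norm ?q ^ 2 = ?q \<bullet> w"
    using inner_range_mp_inv_proj[OF assms, of "mp_inv T *v w" w]
    by (simp add: power2_norm_eq_inner)
  also have "\<dots> \<le> norm ?q * norm w"
    by (rule norm_cauchy_schwarz)
  finally show ?thesis
    by (metis mult_le_cancel_left_pos norm_ge_zero power2_eq_square less_eq_real_def
        order_trans)
qed

text \<open>b - S b is b clipped to [-g, g]; where S b is nonzero, b - S b sits at an endpoint.\<close>

lemma soft_shrink_inner_residual_le:
  assumes "g \<ge> 0"
  shows "soft_shrink g b \<bullet> ((a - soft_shrink g a) - (b - soft_shrink g b)) \<le> 0"
  unfolding inner_vec_def using assms
  by (intro sum_nonpos) (auto simp: soft_shrink_def mult_nonneg_nonpos mult_nonpos_nonneg)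

definition shrink_potential :: "real \<Rightarrow> real^'l \<Rightarrow> real" where
  "shrink_potential g v = (norm (soft_shrink g v))\<^sup>2 / 2"

lemma shrink_potential_cocoercive:
  assumes "g \<ge> 0"
  shows "shrink_potential g b + soft_shrink g b \<bullet> (a - b)
           + (norm (soft_shrink g a - soft_shrink g b))\<^sup>2 / 2
         \<le> shrink_potential g a"
proof -
  have "shrink_potential g b + soft_shrink g b \<bullet> (a - b)
          + (norm (soft_shrink g a - soft_shrink g b))\<^sup>2 / 2 - shrink_potential g a
        = soft_shrink g b \<bullet> ((a - soft_shrink g a) - (b - soft_shrink g b))"
    by (simp add: shrink_potential_def power2_norm_eq_inner inner_diff_left inner_diff_right
        inner_add_left inner_add_right inner_commute field_simps)
  then show ?thesis
    using soft_shrink_inner_residual_le[OF assms, where a = a and b = b] by linarith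
qed

text \<open>
  With u = T x and a = T (x + y) this is \<phi>*(u) - |u|^2/2, where a attains the supremum in
  the conjugate \<phi>* of \<phi> = shrink_potential restricted to the range of T.
\<close>

definition H_potential :: "real^'n^'l \<Rightarrow> real \<Rightarrow> real^'n \<Rightarrow> real^'n \<Rightarrow> real" where
  "H_potential T g x y =
     (T *v (x + y)) \<bullet> (T *v x) - shrink_potential g (T *v (x + y)) - (norm (T *v x))\<^sup>2 / 2"

lemma H_map_subgradient_ineq:
  fixes T :: "real^'n^'l"
  assumes "rank T = CARD('n)" and "g \<ge> 0"
    and "y \<in> H_map T g x" and "y' \<in> H_map T g x'"
  shows "inner_T T (x' - x) y \<le> H_potential T g x' y' - H_potential T g x y"
proof -
  define a a' u u' where "a = T *v (x + y)" and "a' = T *v (x' + y')"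
    and "u = T *v x" and "u' = T *v x'"
  have u: "u = T *v (mp_inv T *v soft_shrink g a)"
    and u': "u' = T *v (mp_inv T *v soft_shrink g a')"
    using assms(3,4) by (simp_all add: H_map_def a_def a'_def u_def u'_def)
  have "inner_T T (x' - x) y = (u' - u) \<bullet> (a - u)"
    by (simp add: inner_T_eq_inner a_def u_def u'_def algebra_simps)
  also have "\<dots> = H_potential T g x' y' - H_potential T g x y
      - (shrink_potential g a - shrink_potential g a' - (a - a') \<bullet> u' - (norm (u - u'))\<^sup>2 / 2)"
    unfolding H_potential_def a_def a'_def u_def u'_def
    by (simp add: power2_norm_eq_inner inner_commute algebra_simps; simp add: field_simps)
  also have "\<dots> \<le> H_potential T g x' y' - H_potential T g x y"
  proof -
    have "a - a' = T *v ((x + y) - (x' + y'))"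
      by (simp add: a_def a'_def matrix_vector_mult_diff_distrib)
    then have "(a - a') \<bullet> u' = (a - a') \<bullet> soft_shrink g a'"
      unfolding u' by (simp only: inner_range_mp_inv_proj[OF assms(1)])
    then have range: "(a - a') \<bullet> u' = soft_shrink g a' \<bullet> (a - a')"
      by (simp only: inner_commute)
    have "norm (u - u') \<le> norm (soft_shrink g a - soft_shrink g a')"
      using norm_mp_inv_proj_le[OF assms(1)]
      by (simp add: u u' flip: matrix_vector_mult_diff_distrib)
    then have contraction:
      "(norm (u - u'))\<^sup>2 \<le> (norm (soft_shrink g a - soft_shrink g a'))\<^sup>2"
      by (simp add: power_mono)
    show ?thesis
      using range contraction shrink_potential_cocoercive[OF assms(2), where a = a and b = a']
      by linarith
  qed
  finally show ?thesis .
qed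

theorem theorem3p4:
  fixes T :: "real^'n^'l" and g :: real
    and m :: nat and x y :: "nat \<Rightarrow> real^'n"
  assumes "CARD('l) \<ge> CARD('n)"
    and "rank T = CARD('n)"
    and "g > 0"
    and "m \<ge> 2"
    and "\<And>i. i < m \<Longrightarrow> y i \<in> H_map T g (x i)"
  shows "(\<Sum>i<m. inner_T T (x (Suc i mod m) - x i) (y i)) \<le> 0"
  \<comment> \<open>The bound on L follows from the rank condition, and the cycle length m is arbitrary.\<close>
proof (rule cyclic_sum_le_zero_of_potential)
  fix i j
  assume "i < m" "j < m"
  then show "inner_T T (x j - x i) (y i)
             \<le> H_potential T g (x j) (y j) - H_potential T g (x i) (y i)"
    using assms(2,3,5) by (intro H_map_subgradient_ineq) auto
qed

end
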